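(* Let $X$ be a regular ultrametric space with Borel measure $\nu$ and ultrametric wavelets $\{\Psi_{Ij}\}$, and let $T$ be an ultrametric pseudodifferential operator on $X$ whose eigenvalue on the wavelets $\Psi_{Ij}$ is $\lambda_I$. Let $f\in D'_0(X)$, write $f_{Ij}=f(\overline{\Psi_{Ij}})$, let $I_0\subset X$ be a ball with $\nu(I_0)>0$ and $u_0\in\mathbb C$. Consider the Cauchy problem: find $u\in D'(X)$ with $Tu=f$ in $D'_0(X)$ and $u(\chi_{I_0})=u_0\nu(I_0)$. Suppose that $f_{Ij}=0$ for all $j$ whenever $\lambda_I=0$. Then a solution of this Cauchy problem exists, and every solution is given by $$u=u_0+\sum_{I:\lambda_I\neq0}\sum_j\frac{1}{\lambda_I}f_{Ij}\left(\Psi_{Ij}-\frac{1}{\nu(I_0)}\Psi_{Ij}(\chi_{I_0})\right)+\sum_{J:\lambda_J=0}\sum_j u_{Jj}\left(\Psi_{Jj}-\frac{1}{\nu(I_0)}\Psi_{Jj}(\chi_{I_0})\right),$$ where the $u_{Jj}$ ($\lambda_J=0$) are arbitrary complex numbers and $\Psi_{Ij}(\chi_{I_0})=\int_X\Psi_{Ij}\chi_{I_0}\,d\nu$.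
   Context: An ultrametric space $X$ is regular if: (1) the set of balls of nonzero diameter is finite or countable; (2) for every decreasing sequence of balls the diameters tend to zero; (3) every ball of nonzero diameter is a finite union of maximal subballs. $\nu$ is a $\sigma$-additive Borel measure on $X$. For a ball $I$ of nonzero diameter, $V^0(I)$ is the space of linear combinations of characteristic functions of the maximal subballs of $I$ having zero $\nu$-mean, and $\{\Psi_{Ij}\}_j$ is a fixed orthonormal basis of $V^0(I)$ in $L^2(X,\nu)$; the ultrametric wavelets are all such $\Psi_{Ij}$, $I$ running over balls of nonzero diameter. $\chi_I$ is the characteristic function of $I$. For $x,y\in X$, $\sup(x,y)$ is the smallest ball containing $x$ and $y$. An ultrametric pseudodifferential operator is $Tf(x)=\int_X T(\sup(x,y))(f(x)-f(y))\,d\nu(y)$ with $T(\cdot)$ a complex function on balls, such that each wavelet is an eigenfunction, $T\Psi_{Ij}=\lambda_I\Psi_{Ij}$, with eigenvalue depending only on $I$. $D(X)$ is the space of locally constant compactly supported complex functions (test functions) with the topology in which a sequence converges iff it lies in a finite-dimensional span of characteristic functions of finitely many balls (from a finite regular subtree of balls) and converges there; $D'(X)$ is its space of linear functionals. $D_0(X)\subset D(X)$ is the space of mean-zero test functions (finite linear combinations of wavelets), and the Lizorkin space $D'_0(X)$ is the space of linear functionals on $D_0(X)$. For $u\in D'(X)$, $Tu\in D'_0(X)$ is defined by $(Tu)(\overline{\Psi_{Ij}})=\lambda_I\,u(\overline{\Psi_{Ij}})$. Series of functions are understood as limits of partial sums along the filtration by finite regular subtrees, acting on test functions by integration against $\nu$;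 the constant $u_0$ acts by $\varphi\mapsto u_0\int\varphi\,d\nu$.
   Formalization: The Borel measure $\nu$ is also assumed to give every ball of positive radius (every open ball) positive and finite measure. The statement above fails without it. *)

theory Defs
  imports "HOL-Analysis.Analysis"
begin

text \<open>The space X is the whole type 'a with its metric dist.\<close>

definition ultrametric :: "'a::metric_space itself \<Rightarrow> bool" where
  "ultrametric _ \<longleftrightarrow> (\<forall>x y z::'a. dist x z \<le> max (dist x y) (dist y z))"

text \<open>Balls are closed balls (radius 0 allowed; then the ball is a point).\<close>
definition is_ball :: "'a::metric_space set \<Rightarrow> bool" where
  "is_ball B \<longleftrightarrow> (\<exists>x r. 0 \<le> r \<and> B = cball x r)"

definition maxsub :: "'a::metric_space set \<Rightarrow> 'a set set" where
  "maxsub I = {B. is_ball B \<and> B \<subset> I \<and> \<not> (\<exists>B'. is_ball B' \<and> B \<subset> B' \<and> B' \<subset> I)}"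

definition nz_balls :: "'a::metric_space set set" where
  "nz_balls = {I. is_ball I \<and> diameter I \<noteq> 0}"

definition regular_ultrametric :: "'a::metric_space itself \<Rightarrow> bool" where
  "regular_ultrametric T \<longleftrightarrow> ultrametric T
     \<and> countable (nz_balls :: 'a set set)
     \<and> (\<forall>Bs :: nat \<Rightarrow> 'a set. (\<forall>n. is_ball (Bs n)) \<and> (\<forall>n. Bs (Suc n) \<subset> Bs n)
            \<longrightarrow> (\<lambda>n. diameter (Bs n)) \<longlonglongrightarrow> 0)
     \<and> (\<forall>I::'a set. I \<in> nz_balls \<longrightarrow> (\<exists>F. finite F \<and> F \<subseteq> maxsub I \<and> \<Union>F = I))"

definition ball_sup :: "'a::metric_space \<Rightarrow> 'a \<Rightarrow> 'a set" where
  "ball_sup x y = (THE B. is_ball B \<and> x \<in> B \<and> y \<in> B \<and>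
      (\<forall>B'. is_ball B' \<and> x \<in> B' \<and> y \<in> B' \<longrightarrow> B \<subseteq> B'))"

text \<open>A sigma-additive Borel measure; balls of positive radius (= open balls,
  i.e. those whose characteristic function is locally constant) have positive
  finite measure.\<close>
definition ball_measure :: "'a::metric_space measure \<Rightarrow> bool" where
  "ball_measure M \<longleftrightarrow> sets M = sets borel \<and>
     (\<forall>B. is_ball B \<and> open B \<longrightarrow> 0 < emeasure M B \<and> emeasure M B < \<infinity>)"

definition V0 :: "'a::metric_space measure \<Rightarrow> 'a set \<Rightarrow> ('a \<Rightarrow> complex) set" where
  "V0 M I = {g. (\<exists>c. g = (\<lambda>x. \<Sum>B\<in>maxsub I. c B * indicator B x)) \<and> (LINT x|M. g x) = 0}"

definition wavelet_basis :: "'a::metric_space measure \<Rightarrow> ('a set \<Rightarrow> nat \<Rightarrow> 'a \<Rightarrow> complex)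
    \<Rightarrow> ('a set \<Rightarrow> nat set) \<Rightarrow> bool" where
  "wavelet_basis M Psi idx \<longleftrightarrow> (\<forall>I\<in>nz_balls.
      finite (idx I)
    \<and> (\<forall>j\<in>idx I. Psi I j \<in> V0 M I)
    \<and> (\<forall>j\<in>idx I. \<forall>k\<in>idx I. (LINT x|M. Psi I j x * cnj (Psi I k x)) = (if j = k then 1 else 0))
    \<and> (\<forall>g\<in>V0 M I. \<exists>a. AE x in M. g x = (\<Sum>j\<in>idx I. a j * Psi I j x)))"

definition ultrametric_pdo :: "'a::metric_space measure \<Rightarrow> ('a set \<Rightarrow> complex)
    \<Rightarrow> ('a set \<Rightarrow> complex) \<Rightarrow> ('a set \<Rightarrow> nat \<Rightarrow> 'a \<Rightarrow> complex) \<Rightarrow> ('a set \<Rightarrow> nat set) \<Rightarrow> bool" where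
  "ultrametric_pdo M Tk lam Psi idx \<longleftrightarrow> (\<forall>I\<in>nz_balls. \<forall>j\<in>idx I.
      AE x in M. integrable M (\<lambda>y. Tk (ball_sup x y) * (Psi I j x - Psi I j y))
        \<and> (LINT y|M. Tk (ball_sup x y) * (Psi I j x - Psi I j y)) = lam I * Psi I j x)"

definition test_fun :: "('a::metric_space \<Rightarrow> complex) set" where
  "test_fun = {\<phi>. \<exists>F c. finite F \<and> (\<forall>B\<in>F. is_ball B \<and> open B)
                     \<and> \<phi> = (\<lambda>x. \<Sum>B\<in>F. c B * indicator B x)}"

definition test_fun0 :: "'a::metric_space measure \<Rightarrow> ('a \<Rightarrow> complex) set" where
  "test_fun0 M = {\<phi>\<in>test_fun. (LINT x|M. \<phi> x) = 0}"

text \<open>Linear functionals on a space S of functions (all are continuous for the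
  inductive-limit topology of finite-dimensional subspaces).\<close>
definition lin_fun :: "('a \<Rightarrow> complex) set \<Rightarrow> (('a \<Rightarrow> complex) \<Rightarrow> complex) \<Rightarrow> bool" where
  "lin_fun S u \<longleftrightarrow> (\<forall>\<phi>\<in>S. \<forall>\<psi>\<in>S. u (\<lambda>x. \<phi> x + \<psi> x) = u \<phi> + u \<psi>)
                  \<and> (\<forall>\<phi>\<in>S. \<forall>a. u (\<lambda>x. a * \<phi> x) = a * u \<phi>)"

text \<open>Tu = f in D'_0(X), where Tu in D'_0(X) is defined on the basis of conjugated
  wavelets of D_0(X) by (Tu)(conj Psi_Ij) = lam I * u(conj Psi_Ij).\<close>
definition pdo_eq :: "('a::metric_space set \<Rightarrow> complex) \<Rightarrow> ('a set \<Rightarrow> nat \<Rightarrow> 'a \<Rightarrow> complex)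
    \<Rightarrow> ('a set \<Rightarrow> nat set) \<Rightarrow> (('a \<Rightarrow> complex) \<Rightarrow> complex) \<Rightarrow> (('a \<Rightarrow> complex) \<Rightarrow> complex) \<Rightarrow> bool" where
  "pdo_eq lam Psi idx u f \<longleftrightarrow> (\<forall>I\<in>nz_balls. \<forall>j\<in>idx I.
      lam I * u (\<lambda>x. cnj (Psi I j x)) = f (\<lambda>x. cnj (Psi I j x)))"

definition cauchy_solution :: "'a::metric_space measure \<Rightarrow> ('a set \<Rightarrow> complex)
    \<Rightarrow> ('a set \<Rightarrow> nat \<Rightarrow> 'a \<Rightarrow> complex) \<Rightarrow> ('a set \<Rightarrow> nat set) \<Rightarrow> (('a \<Rightarrow> complex) \<Rightarrow> complex)
    \<Rightarrow> 'a set \<Rightarrow> complex \<Rightarrow> (('a \<Rightarrow> complex) \<Rightarrow> complex) \<Rightarrow> bool" where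
  "cauchy_solution M lam Psi idx f I0 u0 u \<longleftrightarrow>
     lin_fun test_fun u \<and> pdo_eq lam Psi idx u f
     \<and> u (indicator I0) = u0 * complex_of_real (measure M I0)"

text \<open>The distribution Psi_Ij - (1/nu(I0)) Psi_Ij(chi_I0), acting on a test function
  phi by integration against nu.\<close>
definition wave_term :: "'a::metric_space measure \<Rightarrow> 'a set \<Rightarrow> ('a \<Rightarrow> complex)
    \<Rightarrow> ('a \<Rightarrow> complex) \<Rightarrow> complex" where
  "wave_term M I0 \<Psi> \<phi> = (LINT x|M. \<Psi> x * \<phi> x)
     - (LINT x|M. \<Psi> x * indicator I0 x) / complex_of_real (measure M I0) * (LINT x|M. \<phi> x)"

text \<open>u = u0 + sum_{lam_I <> 0} sum_j f_Ij/lam_I (Psi_Ij - ...) + sum_{lam_J = 0} sum_j c_Jj (Psi_Jj - ...),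
  the series acting on each test function and converging (as a sum over the
  countable index set of pairs (I,j)).\<close>
definition solution_formula :: "'a::metric_space measure \<Rightarrow> ('a set \<Rightarrow> complex)
    \<Rightarrow> ('a set \<Rightarrow> nat \<Rightarrow> 'a \<Rightarrow> complex) \<Rightarrow> ('a set \<Rightarrow> nat set) \<Rightarrow> (('a \<Rightarrow> complex) \<Rightarrow> complex)
    \<Rightarrow> 'a set \<Rightarrow> complex \<Rightarrow> ('a set \<Rightarrow> nat \<Rightarrow> complex) \<Rightarrow> (('a \<Rightarrow> complex) \<Rightarrow> complex) \<Rightarrow> bool" where
  "solution_formula M lam Psi idx f I0 u0 c u \<longleftrightarrow> (\<forall>\<phi>\<in>test_fun.
     ((\<lambda>(I, j). (if lam I \<noteq> 0 then f (\<lambda>x. cnj (Psi I j x)) / lam I else c I j)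
                 * wave_term M I0 (Psi I j) \<phi>)
       has_sum (u \<phi> - u0 * (LINT x|M. \<phi> x))) {(I, j). I \<in> nz_balls \<and> j \<in> idx I})"

end

theory Submission
  imports Defs
begin

text \<open>The conjugated wavelets together with \<open>\<chi>\<^sub>I\<^sub>0\<close> span the test functions. A mean-zero
  test function is a combination of the differences \<open>\<chi>\<^sub>B - \<nu>(B)/\<nu>(K) \<chi>\<^sub>K\<close> for a single large
  ball \<open>K\<close>; descending from \<open>K\<close> to \<open>B\<close> through maximal subballs writes each difference as a
  finite sum of elements of the spaces \<open>V\<^sup>0(I)\<close>, and regularity forces the descent to stop.
  In the resulting expansion of a test function, the coefficient of the conjugate of \<open>\<Psi>\<^sub>I\<^sub>j\<close>
  is the value on it of the distribution \<open>\<Psi>\<^sub>I\<^sub>j - \<nu>(I\<^sub>0)\<^sup>-\<^sup>1 \<Psi>\<^sub>I\<^sub>j(\<chi>\<^sub>I\<^sub>0)\<close>. So a linear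
  functional on test functions amounts to a free choice of its values on the conjugated wavelets
  and on \<open>\<chi>\<^sub>I\<^sub>0\<close>, and the Cauchy problem prescribes precisely these: \<open>f\<^sub>I\<^sub>j/\<lambda>\<^sub>I\<close> where
  \<open>\<lambda>\<^sub>I \<noteq> 0\<close>, anything where \<open>\<lambda>\<^sub>I = 0\<close> (consistent because \<open>f\<^sub>I\<^sub>j = 0\<close> there), and
  \<open>u\<^sub>0 \<nu>(I\<^sub>0)\<close> on \<open>\<chi>\<^sub>I\<^sub>0\<close>.\<close>

section \<open>Balls in ultrametric spaces\<close>

lemma ultrametric_dist_le:
  assumes "ultrametric TYPE('a::metric_space)"
  shows "dist (x::'a) z \<le> max (dist x y) (dist y z)"
  using assms unfolding ultrametric_def by blast

lemma ultrametric_cball_open: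
  assumes "ultrametric TYPE('a::metric_space)" and "r > 0"
  shows "open (cball (x::'a) r)"
proof (rule openI)
  fix z assume z: "z \<in> cball x r"
  have "ball z r \<subseteq> cball x r"
  proof
    fix w assume "w \<in> ball z r"
    then show "w \<in> cball x r"
      using z ultrametric_dist_le[OF assms(1), of x w z] by auto
  qed
  then show "\<exists>e>0. ball z e \<subseteq> cball x r" using assms(2) by blast
qed

lemma ultrametric_balls_nested:
  assumes u: "ultrametric TYPE('a::metric_space)" and "is_ball (A::'a set)" "is_ball B"
    and "A \<inter> B \<noteq> {}"
  shows "A \<subseteq> B \<or> B \<subseteq> A"
proof -
  obtain x r where A: "A = cball x r" using assms(2) unfolding is_ball_def by blast
  obtain y s where B: "B = cball y s" using assms(3) unfolding is_ball_def by blast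
  obtain z where z: "z \<in> A" "z \<in> B" using assms(4) by blast
  have smaller_inside: "cball a p \<subseteq> cball b q"
    if "p \<le> q" "c \<in> cball a p" "c \<in> cball b q" for a b c :: 'a and p q
  proof
    fix w assume w: "w \<in> cball a p"
    have "dist c w \<le> p"
      using ultrametric_dist_le[OF u, of c w a] w that by (auto simp: dist_commute)
    then show "w \<in> cball b q"
      using ultrametric_dist_le[OF u, of b w c] that by auto
  qed
  consider "r \<le> s" | "s \<le> r" by linarith
  then show ?thesis
    using smaller_inside[of r s z x y] smaller_inside[of s r z y x] A B z by cases blast+
qed

lemma is_ball_nonempty: "is_ball B \<Longrightarrow> B \<noteq> {}"
  unfolding is_ball_def by auto

lemma is_ball_closed: "is_ball B \<Longrightarrow> closed B"
  unfolding is_ball_def by auto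

lemma is_ball_bounded: "is_ball B \<Longrightarrow> bounded B"
  unfolding is_ball_def by auto

lemma nz_ballsI: "is_ball I \<Longrightarrow> x \<in> I \<Longrightarrow> y \<in> I \<Longrightarrow> x \<noteq> y \<Longrightarrow> I \<in> nz_balls"
  unfolding nz_balls_def using diameter_bounded_bound[of I x y] is_ball_bounded[of I] by fastforce

lemma nz_balls_open:
  assumes "ultrametric TYPE('a::metric_space)" and "(I::'a set) \<in> nz_balls"
  shows "open I"
proof -
  obtain x r where I: "I = cball x r" "r \<ge> 0" using assms(2) unfolding nz_balls_def is_ball_def by blast
  then have "r \<noteq> 0" using assms(2) unfolding nz_balls_def by auto
  then show ?thesis using ultrametric_cball_open[OF assms(1)] I by simp
qed

definition finite_combinations :: "'i set \<Rightarrow> ('i \<Rightarrow> 'a \<Rightarrow> complex) \<Rightarrow> ('a \<Rightarrow> complex) set" where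
  "finite_combinations P h = {g. \<exists>S a. finite S \<and> S \<subseteq> P \<and> g = (\<lambda>x. \<Sum>p\<in>S. a p * h p x)}"

lemma finite_combinationsI:
  "finite S \<Longrightarrow> S \<subseteq> P \<Longrightarrow> (\<lambda>x. \<Sum>p\<in>S. a p * h p x) \<in> finite_combinations P h"
  unfolding finite_combinations_def by blast

lemma finite_combinationsE:
  assumes "g \<in> finite_combinations P h"
  obtains S a where "finite S" "S \<subseteq> P" "g = (\<lambda>x. \<Sum>p\<in>S. a p * h p x)"
  using assms unfolding finite_combinations_def by blast

lemma finite_combinations_zero: "(\<lambda>x. 0) \<in> finite_combinations P h"
  using finite_combinationsI[of "{}" P] by simp

lemma finite_combinations_generator:
  assumes "p \<in> P"
  shows "h p \<in> finite_combinations P h"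
  using finite_combinationsI[of "{p}" P "\<lambda>_. 1" h] assms by simp

lemma finite_combinations_add:
  assumes "g \<in> finite_combinations P h" "g' \<in> finite_combinations P h"
  shows "(\<lambda>x. g x + g' x) \<in> finite_combinations P h"
proof -
  obtain S a where S: "finite S" "S \<subseteq> P" "g = (\<lambda>x. \<Sum>p\<in>S. a p * h p x)"
    using assms(1) by (rule finite_combinationsE)
  obtain T b where T: "finite T" "T \<subseteq> P" "g' = (\<lambda>x. \<Sum>p\<in>T. b p * h p x)"
    using assms(2) by (rule finite_combinationsE)
  have extend: "(\<Sum>p\<in>S \<union> T. (if p \<in> R then c p else 0) * h p x) = (\<Sum>p\<in>R. c p * h p x)"
    if "R \<subseteq> S \<union> T" for R c x
    using S(1) T(1) that by (intro sum.mono_neutral_cong_right) auto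
  have "(\<lambda>x. g x + g' x)
      = (\<lambda>x. \<Sum>p\<in>S \<union> T. ((if p \<in> S then a p else 0) + (if p \<in> T then b p else 0)) * h p x)"
    unfolding distrib_right sum.distrib extend[OF Un_upper1] extend[OF Un_upper2] S(3) T(3) ..
  then show ?thesis
    using finite_combinationsI[of "S \<union> T" P] S(1,2) T(1,2) by simp
qed

lemma finite_combinations_cmult:
  assumes "g \<in> finite_combinations P h"
  shows "(\<lambda>x. c * g x) \<in> finite_combinations P h"
proof -
  obtain S a where S: "finite S" "S \<subseteq> P" "g = (\<lambda>x. \<Sum>p\<in>S. a p * h p x)"
    using assms by (rule finite_combinationsE)
  then show ?thesis
    using finite_combinationsI[of S P "\<lambda>p. c * a p"] by (simp add: sum_distrib_left mult.assoc)
qed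

lemma finite_combinations_sum:
  assumes "finite F" "\<And>i. i \<in> F \<Longrightarrow> g i \<in> finite_combinations P h"
  shows "(\<lambda>x. \<Sum>i\<in>F. g i x) \<in> finite_combinations P h"
  using assms by (induction F rule: finite_induct) (auto intro: finite_combinations_zero finite_combinations_add)

lemma test_fun_eq: "test_fun = finite_combinations {B. is_ball B \<and> open B} indicator"
  unfolding test_fun_def finite_combinations_def by blast

lemma test_fun_indicator: "is_ball B \<Longrightarrow> open B \<Longrightarrow> indicator B \<in> test_fun"
  unfolding test_fun_eq by (rule finite_combinations_generator) simp

lemma test_fun_zero: "(\<lambda>x. 0) \<in> test_fun"
  unfolding test_fun_eq by (rule finite_combinations_zero)

lemma test_fun_add: "\<phi> \<in> test_fun \<Longrightarrow> \<psi> \<in> test_fun \<Longrightarrow> (\<lambda>x. \<phi> x + \<psi> x) \<in> test_fun"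
  unfolding test_fun_eq by (rule finite_combinations_add)

lemma test_fun_cmult: "\<phi> \<in> test_fun \<Longrightarrow> (\<lambda>x. c * \<phi> x) \<in> test_fun"
  unfolding test_fun_eq by (rule finite_combinations_cmult)

lemma test_fun_diff: "\<phi> \<in> test_fun \<Longrightarrow> \<psi> \<in> test_fun \<Longrightarrow> (\<lambda>x. \<phi> x - \<psi> x) \<in> test_fun"
  using test_fun_add[OF _ test_fun_cmult[of \<psi> "-1"], of \<phi>] by simp

lemma test_fun_sum:
  "finite F \<Longrightarrow> (\<And>i. i \<in> F \<Longrightarrow> g i \<in> test_fun) \<Longrightarrow> (\<lambda>x. \<Sum>i\<in>F. g i x) \<in> test_fun"
  unfolding test_fun_eq by (rule finite_combinations_sum)

lemma cnj_indicator: "cnj (indicator B x :: complex) = indicator B x"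
  by (simp split: split_indicator)

lemma test_fun_cnj:
  assumes "\<phi> \<in> test_fun"
  shows "(\<lambda>x. cnj (\<phi> x)) \<in> test_fun"
proof -
  obtain F c where F: "finite F" "F \<subseteq> {B. is_ball B \<and> open B}" "\<phi> = (\<lambda>x. \<Sum>B\<in>F. c B * indicator B x)"
    using assms unfolding test_fun_eq by (rule finite_combinationsE)
  have "(\<lambda>x. cnj (\<phi> x)) = (\<lambda>x. \<Sum>B\<in>F. cnj (c B) * indicator B x)"
    unfolding F(3) by (simp only: cnj_sum complex_cnj_mult cnj_indicator)
  then show ?thesis
    unfolding test_fun_eq using finite_combinationsI[OF F(1,2)] by simp
qed

lemma lin_fun_add: "lin_fun S u \<Longrightarrow> \<phi> \<in> S \<Longrightarrow> \<psi> \<in> S \<Longrightarrow> u (\<lambda>x. \<phi> x + \<psi> x) = u \<phi> + u \<psi>"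
  unfolding lin_fun_def by blast

lemma lin_fun_cmult: "lin_fun S u \<Longrightarrow> \<phi> \<in> S \<Longrightarrow> u (\<lambda>x. a * \<phi> x) = a * u \<phi>"
  unfolding lin_fun_def by blast

lemma lin_fun_plus: "lin_fun S u \<Longrightarrow> lin_fun S v \<Longrightarrow> lin_fun S (\<lambda>\<phi>. u \<phi> + v \<phi>)"
  unfolding lin_fun_def by (simp add: algebra_simps)

lemma lin_fun_scaled: "lin_fun S u \<Longrightarrow> lin_fun S (\<lambda>\<phi>. c * u \<phi>)"
  unfolding lin_fun_def by (simp add: algebra_simps)

lemma lin_fun_test_fun_sum:
  assumes "lin_fun test_fun u" "finite F" "\<And>i. i \<in> F \<Longrightarrow> h i \<in> test_fun"
  shows "u (\<lambda>x. \<Sum>i\<in>F. a i * h i x) = (\<Sum>i\<in>F. a i * u (h i))"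
  using assms(2,3)
proof (induction F rule: finite_induct)
  case empty
  then show ?case using lin_fun_cmult[OF assms(1) test_fun_zero, of 0] by simp
next
  case (insert i F)
  have summand: "(\<lambda>x. a i * h i x) \<in> test_fun" and rest: "(\<lambda>x. \<Sum>i\<in>F. a i * h i x) \<in> test_fun"
    using insert by (auto intro!: test_fun_cmult test_fun_sum)
  have "u (\<lambda>x. \<Sum>i\<in>insert i F. a i * h i x) = u (\<lambda>x. a i * h i x + (\<Sum>i\<in>F. a i * h i x))"
    using insert(1,2) by simp
  also have "\<dots> = u (\<lambda>x. a i * h i x) + u (\<lambda>x. \<Sum>i\<in>F. a i * h i x)"
    using lin_fun_add[OF assms(1) summand rest] by simp
  finally show ?case using insert lin_fun_cmult[OF assms(1)] by simp
qed

lemma lin_fun_has_sum: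
  assumes closed: "\<And>\<phi> \<psi>. \<phi> \<in> S \<Longrightarrow> \<psi> \<in> S \<Longrightarrow> (\<lambda>x. \<phi> x + \<psi> x) \<in> S"
      "\<And>\<phi> a. \<phi> \<in> S \<Longrightarrow> (\<lambda>x. a * \<phi> x) \<in> S"
    and lin: "\<And>p. p \<in> A \<Longrightarrow> lin_fun S (\<lambda>\<phi>. F \<phi> p)"
    and sums: "\<And>\<phi>. \<phi> \<in> S \<Longrightarrow> (F \<phi> has_sum v \<phi>) A"
  shows "lin_fun S v"
  unfolding lin_fun_def
proof (intro conjI ballI allI)
  fix \<phi> \<psi> assume \<phi>: "\<phi> \<in> S" and \<psi>: "\<psi> \<in> S"
  have "F (\<lambda>x. \<phi> x + \<psi> x) p = F \<phi> p + F \<psi> p" if "p \<in> A" for p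
    using lin_fun_add[OF lin[OF that] \<phi> \<psi>] .
  then have "(F (\<lambda>x. \<phi> x + \<psi> x) has_sum (v \<phi> + v \<psi>)) A"
    by (rule has_sum_cong[THEN iffD2, OF _ has_sum_add[OF sums[OF \<phi>] sums[OF \<psi>]]])
  then show "v (\<lambda>x. \<phi> x + \<psi> x) = v \<phi> + v \<psi>"
    using has_sum_unique sums[OF closed(1)[OF \<phi> \<psi>]] by blast
next
  fix \<phi> a assume \<phi>: "\<phi> \<in> S"
  have "F (\<lambda>x. a * \<phi> x) p = a * F \<phi> p" if "p \<in> A" for p
    using lin_fun_cmult[OF lin[OF that] \<phi>] .
  then have "(F (\<lambda>x. a * \<phi> x) has_sum (a * v \<phi>)) A"
    by (rule has_sum_cong[THEN iffD2, OF _ has_sum_cmult_right[OF sums[OF \<phi>]]])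
  then show "v (\<lambda>x. a * \<phi> x) = a * v \<phi>"
    using has_sum_unique sums[OF closed(2)[OF \<phi>]] by blast
qed

lemma has_sum_finite_support:
  assumes "finite S" "S \<subseteq> A" "\<And>p. p \<in> A - S \<Longrightarrow> f p = 0"
  shows "(f has_sum sum f S) A"
proof -
  have "(f has_sum sum f S) A \<longleftrightarrow> (f has_sum sum f S) S"
    by (rule has_sum_cong_neutral) (use assms(2,3) in auto)
  then show ?thesis using has_sum_finiteI[OF assms(1) refl] by blast
qed

section \<open>Regular ultrametric spaces with a ball measure\<close>

locale regular_ultrametric_measure =
  fixes M :: "'a::metric_space measure"
  assumes regular: "regular_ultrametric TYPE('a)"
    and ball_measure: "ball_measure M"
begin

lemma ultrametric: "ultrametric TYPE('a)"
  using regular unfolding regular_ultrametric_def by blast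

lemma sets_M: "sets M = sets borel"
  using ball_measure unfolding ball_measure_def by blast

lemma space_M [simp]: "space M = UNIV"
  using sets_eq_imp_space_eq[OF sets_M] by simp

lemma ball_sets: "is_ball B \<Longrightarrow> B \<in> sets M"
  by (metis sets_M borel_closed is_ball_closed)

lemma emeasure_open_ball: "is_ball B \<Longrightarrow> open B \<Longrightarrow> 0 < emeasure M B \<and> emeasure M B < \<infinity>"
  using ball_measure unfolding ball_measure_def by blast

lemma measure_open_ball_pos: "is_ball B \<Longrightarrow> open B \<Longrightarrow> 0 < measure M B"
  using emeasure_open_ball[of B] by (simp add: measure_def enn2real_positive_iff)

lemma integral_indicator_complex:
  "(LINT x|M. indicator A x :: complex) = complex_of_real (measure M A)"
proof -
  have "(LINT x|M. indicator A x :: complex) = (LINT x|M. complex_of_real (indicator A x))"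
    by (simp add: of_real_indicator)
  then show ?thesis by simp
qed

lemma integrable_indicator_open_ball:
  assumes "is_ball B" "open B"
  shows "integrable M (\<lambda>x. indicator B x :: complex)"
proof -
  have "integrable M (\<lambda>x. complex_of_real (indicator B x))"
    using emeasure_open_ball[OF assms] ball_sets[OF assms(1)] by (simp add: integrable_indicator_iff)
  then show ?thesis by (simp add: of_real_indicator)
qed

lemma AE_open_ball_witness:
  assumes "AE x in M. P x" "is_ball B" "open B"
  shows "\<exists>x\<in>B. P x"
proof (rule ccontr)
  assume none: "\<not> (\<exists>x\<in>B. P x)"
  obtain N where N: "{x \<in> space M. \<not> P x} \<subseteq> N" "emeasure M N = 0" "N \<in> sets M"
    using assms(1) by (rule AE_E)
  have "B \<subseteq> N" using N(1) none by auto
  then have "emeasure M B \<le> 0" using emeasure_mono[OF _ N(3)] N(2) by metis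
  then show False using emeasure_open_ball[OF assms(2,3)] by simp
qed

lemma integrable_test_fun:
  assumes "\<phi> \<in> test_fun"
  shows "integrable M \<phi>"
proof -
  obtain F c where F: "finite F" "F \<subseteq> {B. is_ball B \<and> open B}" "\<phi> = (\<lambda>x. \<Sum>B\<in>F. c B * indicator B x)"
    using assms unfolding test_fun_eq by (rule finite_combinationsE)
  have "integrable M (\<lambda>x. \<Sum>B\<in>F. c B * indicator B x)"
    using F(2) by (intro Bochner_Integration.integrable_sum integrable_mult_right integrable_indicator_open_ball) auto
  then show ?thesis using F(3) by simp
qed

lemma integral_test_fun:
  assumes "finite F" "F \<subseteq> {B. is_ball B \<and> open B}"
  shows "(LINT x|M. (\<Sum>B\<in>F. c B * indicator B x)) = (\<Sum>B\<in>F. c B * complex_of_real (measure M B))"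
  using assms integrable_indicator_open_ball
  by (subst Bochner_Integration.integral_sum) (auto simp: integral_indicator_complex)

lemma integrable_test_fun_mult:
  assumes "\<phi> \<in> test_fun" "\<psi> \<in> test_fun"
  shows "integrable M (\<lambda>x. \<phi> x * \<psi> x)"
proof -
  obtain F c where F: "finite F" "F \<subseteq> {B. is_ball B \<and> open B}" "\<phi> = (\<lambda>x. \<Sum>B\<in>F. c B * indicator B x)"
    using assms(1) unfolding test_fun_eq by (rule finite_combinationsE)
  have "integrable M (\<lambda>x. c A * (indicator A x * \<psi> x))" if "A \<in> F" for A
  proof -
    have "integrable M (\<lambda>x. indicator A x *\<^sub>R \<psi> x)"
      using integrable_test_fun[OF assms(2)] ball_sets F(2) that
      by (intro integrable_mult_indicator) auto
    then show ?thesis by (simp add: scaleR_conv_of_real of_real_indicator)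
  qed
  then show ?thesis
    unfolding F(3) sum_distrib_right using F(1) by (simp add: mult.assoc)
qed

lemma maxsub_cover: "(I::'a set) \<in> nz_balls \<Longrightarrow> \<exists>F. finite F \<and> F \<subseteq> maxsub I \<and> \<Union>F = I"
  using regular unfolding regular_ultrametric_def by blast

lemma maxsubD: "(B::'a set) \<in> maxsub I \<Longrightarrow> is_ball B \<and> B \<subset> I"
  unfolding maxsub_def by blast

lemma maxsub_maximal: "(B::'a set) \<in> maxsub I \<Longrightarrow> is_ball B' \<Longrightarrow> B \<subseteq> B' \<Longrightarrow> B' \<subset> I \<Longrightarrow> B' = B"
  unfolding maxsub_def by blast

lemma maxsub_disjoint:
  assumes "(B1::'a set) \<in> maxsub I" "B2 \<in> maxsub I" "B1 \<inter> B2 \<noteq> {}"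
  shows "B1 = B2"
proof -
  have "B1 \<subseteq> B2 \<or> B2 \<subseteq> B1"
    using ultrametric_balls_nested[OF ultrametric _ _ assms(3)] assms(1,2) maxsubD by blast
  then show ?thesis using assms(1,2) maxsub_maximal maxsubD by metis
qed

lemma maxsub_eq_cover:
  assumes "F \<subseteq> maxsub (I::'a set)" "\<Union>F = I"
  shows "maxsub I = F"
proof
  show "maxsub I \<subseteq> F"
  proof
    fix B assume B: "B \<in> maxsub I"
    then obtain x where "x \<in> B" using maxsubD is_ball_nonempty by blast
    moreover from this have "x \<in> I" using B maxsubD by blast
    ultimately show "B \<in> F" using maxsub_disjoint[OF B] assms by blast
  qed
qed (use assms in blast)

lemma finite_maxsub: "(I::'a set) \<in> nz_balls \<Longrightarrow> finite (maxsub I)"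
  using maxsub_cover maxsub_eq_cover by metis

lemma Union_maxsub: "(I::'a set) \<in> nz_balls \<Longrightarrow> \<Union>(maxsub I) = I"
  using maxsub_cover maxsub_eq_cover by metis

lemma maxsub_containing:
  assumes "(I::'a set) \<in> nz_balls" "is_ball B" "B \<subset> I"
  shows "\<exists>B'\<in>maxsub I. B \<subseteq> B'"
proof -
  obtain x where x: "x \<in> B" using assms(2) is_ball_nonempty by blast
  then obtain B' where B': "B' \<in> maxsub I" "x \<in> B'" using Union_maxsub[OF assms(1)] assms(3) by blast
  then have "B \<subseteq> B' \<or> B' \<subseteq> B" using ultrametric_balls_nested[OF ultrametric assms(2)] x maxsubD by blast
  then show ?thesis using B' maxsub_maximal[of B' I B] assms(2,3) by blast
qed

text \<open>A maximal subball of radius zero is a point, and it is open because it is the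
  complement in the open ball \<open>I\<close> of the finitely many other, closed, maximal subballs.\<close>

lemma maxsub_open:
  assumes I: "(I::'a set) \<in> nz_balls" and B: "B \<in> maxsub I"
  shows "open B"
proof -
  obtain x r where r: "B = cball x r" "r \<ge> 0" using B maxsubD unfolding is_ball_def by blast
  show ?thesis
  proof (cases "r = 0")
    case False
    then have "r > 0" using r(2) by simp
    then show ?thesis using ultrametric_cball_open[OF ultrametric] r(1) by simp
  next
    case True
    have "B = I - \<Union>(maxsub I - {B})"
    proof
      show "B \<subseteq> I - \<Union>(maxsub I - {B})" using maxsub_disjoint[OF B] B maxsubD by blast
      show "I - \<Union>(maxsub I - {B}) \<subseteq> B" using Union_maxsub[OF I] by blast
    qed
    moreover have "closed (\<Union>(maxsub I - {B}))"
      using finite_maxsub[OF I] maxsubD is_ball_closed by (intro closed_Union) auto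
    ultimately show ?thesis using nz_balls_open[OF ultrametric I] by (metis open_Diff)
  qed
qed

lemma maxsub_combination_eval:
  assumes "(I::'a set) \<in> nz_balls" "B \<in> maxsub I" "x \<in> B"
  shows "(\<Sum>B'\<in>maxsub I. c B' * indicator B' x :: complex) = c B"
proof -
  have "(\<Sum>B'\<in>maxsub I. c B' * indicator B' x :: complex) = (\<Sum>B'\<in>maxsub I. if B' = B then c B else 0)"
    using maxsub_disjoint[OF assms(2)] assms(3) by (intro sum.cong) (auto split: split_indicator)
  then show ?thesis using finite_maxsub[OF assms(1)] assms(2) by simp
qed

lemma maxsub_combination_outside:
  "x \<notin> (I::'a set) \<Longrightarrow> (\<Sum>B\<in>maxsub I. c B * indicator B x :: complex) = 0"
  using maxsubD by (intro sum.neutral) (auto split: split_indicator)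

lemma indicator_eq_sum_maxsub:
  assumes "(I::'a set) \<in> nz_balls"
  shows "indicator I x = (\<Sum>B\<in>maxsub I. indicator B x :: complex)"
proof (cases "x \<in> I")
  case True
  then obtain B where "B \<in> maxsub I" "x \<in> B" using Union_maxsub[OF assms] by blast
  then show ?thesis using maxsub_combination_eval[OF assms, of B x "\<lambda>_. 1"] True by simp
next
  case False
  then show ?thesis using maxsub_combination_outside[of x I "\<lambda>_. 1"] by simp
qed

definition mean_zero_indicator :: "'a set \<Rightarrow> 'a set \<Rightarrow> 'a \<Rightarrow> complex" where
  "mean_zero_indicator B K = (\<lambda>x. indicator B x - complex_of_real (measure M B / measure M K) * indicator K x)"

lemma mean_zero_indicator_self:
  "is_ball B \<Longrightarrow> open B \<Longrightarrow> mean_zero_indicator B B = (\<lambda>x. 0)"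
  using measure_open_ball_pos[of B] unfolding mean_zero_indicator_def by auto

lemma mean_zero_indicator_trans:
  assumes "measure M K' > 0"
  shows "mean_zero_indicator B K
    = (\<lambda>x. mean_zero_indicator B K' x
           + complex_of_real (measure M B / measure M K') * mean_zero_indicator K' K x)"
proof -
  have ratio: "complex_of_real (measure M B / measure M K') * complex_of_real (measure M K' / measure M K)
      = complex_of_real (measure M B / measure M K)"
  proof -
    have "measure M B / measure M K' * (measure M K' / measure M K) = measure M B / measure M K"
      using assms by simp
    then show ?thesis by (metis of_real_mult)
  qed
  have regroup: "a - (r1 * r2) * c = (a - r1 * b) + r1 * (b - r2 * c)" for a b c r1 r2 :: complex
    by (simp add: algebra_simps)
  show ?thesis
    unfolding mean_zero_indicator_def ratio[symmetric] by (intro ext) (rule regroup)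
qed

lemma mean_zero_indicator_maxsub_V0:
  assumes I: "I \<in> nz_balls" and B: "B \<in> maxsub I"
  shows "mean_zero_indicator B I \<in> V0 M I"
proof -
  let ?r = "complex_of_real (measure M B / measure M I)"
  have B_open: "is_ball B" "open B" using B maxsubD maxsub_open[OF I] by auto
  have I_open: "is_ball I" "open I" using I nz_balls_open[OF ultrametric I] unfolding nz_balls_def by auto
  define c where "c B' = (if B' = B then 1 else 0) - ?r" for B'
  have "(\<Sum>B'\<in>maxsub I. ((if B' = B then 1 else 0) - ?r) * indicator B' x)
      = (\<Sum>B'\<in>maxsub I. if B' = B then indicator B' x else 0) - ?r * (\<Sum>B'\<in>maxsub I. indicator B' x)"
    for x
    unfolding sum_distrib_left sum_subtractf[symmetric] by (intro sum.cong) (auto simp: left_diff_distrib)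
  then have "mean_zero_indicator B I = (\<lambda>x. \<Sum>B'\<in>maxsub I. c B' * indicator B' x)"
    unfolding mean_zero_indicator_def indicator_eq_sum_maxsub[OF I]
    using finite_maxsub[OF I] B by (simp add: c_def)
  moreover have "(LINT x|M. mean_zero_indicator B I x) = 0"
  proof -
    have "(LINT x|M. mean_zero_indicator B I x)
        = complex_of_real (measure M B) - ?r * complex_of_real (measure M I)"
      using integrable_indicator_open_ball[OF B_open] integrable_indicator_open_ball[OF I_open]
      unfolding mean_zero_indicator_def by (simp add: integral_indicator_complex del: of_real_divide)
    also have "\<dots> = complex_of_real (measure M B - measure M B / measure M I * measure M I)"
      by simp
    finally show ?thesis using measure_open_ball_pos[OF I_open] by simp
  qed
  ultimately show ?thesis unfolding V0_def by blast
qed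

lemma no_descending_balls_around_open:
  assumes "open (B::'a set)" "B \<noteq> {}"
    and K: "\<And>n. is_ball (K n)" "\<And>n. B \<subset> K n" "\<And>n. K (Suc n) \<subset> K n"
  shows False
proof -
  have dec: "\<forall>Bs :: nat \<Rightarrow> 'a set. (\<forall>n. is_ball (Bs n)) \<and> (\<forall>n. Bs (Suc n) \<subset> Bs n)
            \<longrightarrow> (\<lambda>n. diameter (Bs n)) \<longlonglongrightarrow> 0"
    using regular unfolding regular_ultrametric_def by (elim conjE)
  have "(\<lambda>n. diameter (K n)) \<longlonglongrightarrow> 0"
    using dec[rule_format, of K] K(1,3) by blast
  obtain x where x: "x \<in> B" using assms(2) by blast
  obtain e where e: "e > 0" "ball x e \<subseteq> B" using assms(1) x open_contains_ball by blast
  obtain n where n: "norm (diameter (K n) - 0) < e"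
    using LIMSEQ_D[OF \<open>(\<lambda>n. diameter (K n)) \<longlonglongrightarrow> 0\<close> e(1)] by blast
  obtain y where y: "y \<in> K n" "y \<notin> B" using K(2)[of n] by blast
  then have "y \<notin> ball x e" using e(2) by blast
  then have "e \<le> dist x y" by simp
  also have "\<dots> \<le> diameter (K n)"
    using diameter_bounded_bound[OF is_ball_bounded[OF K(1)]] x K(2)[of n] y by blast
  finally show False using n by simp
qed

end

section \<open>Ultrametric wavelets\<close>

locale ultrametric_wavelets = regular_ultrametric_measure M
  for M :: "'a::metric_space measure" +
  fixes Psi :: "'a set \<Rightarrow> nat \<Rightarrow> 'a \<Rightarrow> complex" and idx :: "'a set \<Rightarrow> nat set"
  assumes wavelet_basis: "wavelet_basis M Psi idx"
begin

definition wavelet_index :: "('a set \<times> nat) set" where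
  "wavelet_index = {(I, j). I \<in> nz_balls \<and> j \<in> idx I}"

abbreviation conj_wavelet :: "'a set \<times> nat \<Rightarrow> 'a \<Rightarrow> complex" where
  "conj_wavelet p \<equiv> (\<lambda>x. cnj (Psi (fst p) (snd p) x))"

definition wavelet_span :: "('a \<Rightarrow> complex) set" where
  "wavelet_span = finite_combinations wavelet_index conj_wavelet"

lemma wavelet_indexD: "p \<in> wavelet_index \<Longrightarrow> fst p \<in> nz_balls \<and> snd p \<in> idx (fst p)"
  unfolding wavelet_index_def by auto

lemma wavelet_basisD:
  assumes "I \<in> nz_balls"
  shows "finite (idx I) \<and> (\<forall>j\<in>idx I. Psi I j \<in> V0 M I)
    \<and> (\<forall>j\<in>idx I. \<forall>k\<in>idx I. (LINT x|M. Psi I j x * cnj (Psi I k x)) = (if j = k then 1 else 0))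
    \<and> (\<forall>g\<in>V0 M I. \<exists>a. AE x in M. g x = (\<Sum>j\<in>idx I. a j * Psi I j x))"
  using bspec[OF wavelet_basis[unfolded wavelet_basis_def] assms] .

lemma finite_idx: "I \<in> nz_balls \<Longrightarrow> finite (idx I)"
  using wavelet_basisD by blast

lemma wavelet_V0: "I \<in> nz_balls \<Longrightarrow> j \<in> idx I \<Longrightarrow> Psi I j \<in> V0 M I"
  using wavelet_basisD by blast

lemma wavelet_orthonormal_same_ball:
  "I \<in> nz_balls \<Longrightarrow> j \<in> idx I \<Longrightarrow> k \<in> idx I
    \<Longrightarrow> (LINT x|M. Psi I j x * cnj (Psi I k x)) = (if j = k then 1 else 0)"
  using wavelet_basisD by blast

lemma V0_expansion:
  "I \<in> nz_balls \<Longrightarrow> g \<in> V0 M I \<Longrightarrow> \<exists>a. AE x in M. g x = (\<Sum>j\<in>idx I. a j * Psi I j x)"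
  using wavelet_basisD by blast

lemma V0_test_fun:
  assumes "I \<in> nz_balls" "g \<in> V0 M I"
  shows "g \<in> test_fun"
proof -
  obtain c where c: "g = (\<lambda>x. \<Sum>B\<in>maxsub I. c B * indicator B x)"
    using assms(2) unfolding V0_def by blast
  have "maxsub I \<subseteq> {B. is_ball B \<and> open B}"
    using maxsubD maxsub_open[OF assms(1)] by blast
  then show ?thesis
    unfolding c test_fun_eq using finite_combinationsI[of "maxsub I" _ c indicator] finite_maxsub[OF assms(1)]
    by blast
qed

lemma wavelet_test_fun: "I \<in> nz_balls \<Longrightarrow> j \<in> idx I \<Longrightarrow> Psi I j \<in> test_fun"
  using V0_test_fun wavelet_V0 by blast

lemma conj_wavelet_test_fun: "p \<in> wavelet_index \<Longrightarrow> conj_wavelet p \<in> test_fun"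
  using test_fun_cnj wavelet_test_fun wavelet_indexD by blast

lemma wavelet_mean_zero: "I \<in> nz_balls \<Longrightarrow> j \<in> idx I \<Longrightarrow> (LINT x|M. Psi I j x) = 0"
  using wavelet_V0 unfolding V0_def by blast

lemma V0_outside:
  assumes "g \<in> V0 M I" "x \<notin> I"
  shows "g x = 0"
  using assms maxsub_combination_outside unfolding V0_def by auto

lemma V0_constant_on_subball:
  assumes "I \<in> nz_balls" "g \<in> V0 M I" "is_ball J" "J \<subset> I"
  obtains k where "\<And>x. x \<in> J \<Longrightarrow> g x = k"
proof -
  obtain c where c: "g = (\<lambda>x. \<Sum>B\<in>maxsub I. c B * indicator B x)"
    using assms(2) unfolding V0_def by blast
  obtain B where "B \<in> maxsub I" "J \<subseteq> B" using maxsub_containing[OF assms(1,3,4)] by blast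
  then show ?thesis using that[of "c B"] maxsub_combination_eval[OF assms(1)] c by auto
qed

text \<open>Wavelets of distinct balls are orthogonal: either the balls are disjoint, or the
  wavelet of the larger ball is constant on the smaller one, where the other wavelet
  has mean zero.\<close>

lemma wavelet_orthogonal_nested:
  assumes I: "I \<in> nz_balls" "j \<in> idx I" and I': "I' \<in> nz_balls" "j' \<in> idx I'" and "I' \<subset> I"
  shows "(LINT x|M. Psi I j x * cnj (Psi I' j' x)) = 0"
    and "(LINT x|M. Psi I' j' x * cnj (Psi I j x)) = 0"
proof -
  obtain k where k: "\<And>x. x \<in> I' \<Longrightarrow> Psi I j x = k"
    using V0_constant_on_subball[OF I(1) wavelet_V0[OF I] _ \<open>I' \<subset> I\<close>] I'(1)
    unfolding nz_balls_def by blast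
  have "(\<lambda>x. Psi I j x * cnj (Psi I' j' x)) = (\<lambda>x. k * cnj (Psi I' j' x))"
    using k V0_outside[OF wavelet_V0[OF I']] by fastforce
  then have "(LINT x|M. Psi I j x * cnj (Psi I' j' x)) = k * cnj (LINT x|M. Psi I' j' x)"
    by simp
  then show "(LINT x|M. Psi I j x * cnj (Psi I' j' x)) = 0"
    using wavelet_mean_zero[OF I'] by simp
  have "(\<lambda>x. Psi I' j' x * cnj (Psi I j x)) = (\<lambda>x. Psi I' j' x * cnj k)"
    using k V0_outside[OF wavelet_V0[OF I']] by fastforce
  then have "(LINT x|M. Psi I' j' x * cnj (Psi I j x)) = (LINT x|M. Psi I' j' x) * cnj k"
    by simp
  then show "(LINT x|M. Psi I' j' x * cnj (Psi I j x)) = 0"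
    using wavelet_mean_zero[OF I'] by simp
qed

lemma wavelet_orthonormal:
  assumes I: "I \<in> nz_balls" "j \<in> idx I" and I': "I' \<in> nz_balls" "j' \<in> idx I'"
  shows "(LINT x|M. Psi I j x * cnj (Psi I' j' x)) = (if I = I' \<and> j = j' then 1 else 0)"
proof -
  have balls: "is_ball I" "is_ball I'" using I I' unfolding nz_balls_def by auto
  consider "I = I'" | "I \<inter> I' = {}" | "I' \<subset> I" | "I \<subset> I'"
    using ultrametric_balls_nested[OF ultrametric balls] by blast
  then show ?thesis
  proof cases
    case 1
    then show ?thesis using wavelet_orthonormal_same_ball[OF I(1,2), of j'] I'(2) by simp
  next
    case 2
    then have "(\<lambda>x. Psi I j x * cnj (Psi I' j' x)) = (\<lambda>x. 0)"
      using V0_outside[OF wavelet_V0[OF I]] V0_outside[OF wavelet_V0[OF I']] by fastforce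
    moreover have "I \<noteq> I'" using 2 is_ball_nonempty[OF balls(1)] by blast
    ultimately show ?thesis by simp
  next
    case 3
    then have "I \<noteq> I'" by blast
    then show ?thesis using wavelet_orthogonal_nested(1)[OF I I' 3] by simp
  next
    case 4
    then have "I \<noteq> I'" by blast
    then show ?thesis using wavelet_orthogonal_nested(2)[OF I' I 4] by simp
  qed
qed

text \<open>The basis expansion of an element of \<open>V0 M I\<close> holds only almost everywhere, but both
  sides are constant on the maximal subballs, which have positive measure.\<close>

lemma V0_pointwise_expansion:
  assumes I: "I \<in> nz_balls" and g: "g \<in> V0 M I"
  obtains a where "\<And>x. g x = (\<Sum>j\<in>idx I. a j * Psi I j x)"
proof -
  obtain a where ae: "AE x in M. g x = (\<Sum>j\<in>idx I. a j * Psi I j x)"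
    using V0_expansion[OF I g] by blast
  have "g x = (\<Sum>j\<in>idx I. a j * Psi I j x)" for x
  proof (cases "x \<in> I")
    case False
    then show ?thesis using V0_outside[OF g] V0_outside[OF wavelet_V0[OF I]] by simp
  next
    case True
    then obtain B where B: "B \<in> maxsub I" "x \<in> B" using Union_maxsub[OF I] by blast
    have B_ball: "is_ball B" "B \<subset> I" "open B" using B maxsubD maxsub_open[OF I] by auto
    obtain y where y: "y \<in> B" "g y = (\<Sum>j\<in>idx I. a j * Psi I j y)"
      using AE_open_ball_witness[OF ae B_ball(1,3)] by blast
    have same: "h x = h y" if h: "h \<in> V0 M I" for h
    proof -
      obtain k where "\<And>z. z \<in> B \<Longrightarrow> h z = k"
        using V0_constant_on_subball[OF I h B_ball(1,2)] by blast
      then show ?thesis using B(2) y(1) by simp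
    qed
    have "(\<Sum>j\<in>idx I. a j * Psi I j x) = (\<Sum>j\<in>idx I. a j * Psi I j y)"
      using same[OF wavelet_V0[OF I]] by (intro sum.cong) auto
    then show ?thesis using y(2) same[OF g] by simp
  qed
  then show ?thesis using that by blast
qed

lemma V0_subset_wavelet_span:
  assumes I: "I \<in> nz_balls" and g: "g \<in> V0 M I"
  shows "g \<in> wavelet_span"
proof -
  obtain c where c: "g = (\<lambda>x. \<Sum>B\<in>maxsub I. c B * indicator B x)" and int0: "(LINT x|M. g x) = 0"
    using g unfolding V0_def by blast
  have cnj_int0: "(LINT x|M. cnj (g x)) = 0" using int0 by simp
  have cnj_comb: "(\<lambda>x. cnj (g x)) = (\<lambda>x. \<Sum>B\<in>maxsub I. cnj (c B) * indicator B x)"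
    unfolding c by (simp only: cnj_sum complex_cnj_mult cnj_indicator)
  have "(\<lambda>x. cnj (g x)) \<in> V0 M I"
    unfolding V0_def by (intro CollectI conjI exI[of _ "\<lambda>B. cnj (c B)"] cnj_comb cnj_int0)
  then obtain a where a: "\<And>x. cnj (g x) = (\<Sum>j\<in>idx I. a j * Psi I j x)"
    using V0_pointwise_expansion[OF I] by blast
  have "g = (\<lambda>x. \<Sum>p\<in>Pair I ` idx I. cnj (a (snd p)) * conj_wavelet p x)"
  proof
    fix x
    have "g x = (\<Sum>j\<in>idx I. cnj (a j) * cnj (Psi I j x))"
      using arg_cong[OF a[of x], of cnj] by simp
    also have "\<dots> = (\<Sum>p\<in>Pair I ` idx I. cnj (a (snd p)) * conj_wavelet p x)"
      by (simp add: sum.reindex inj_on_def)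
    finally show "g x = (\<Sum>p\<in>Pair I ` idx I. cnj (a (snd p)) * conj_wavelet p x)" .
  qed
  moreover have "Pair I ` idx I \<subseteq> wavelet_index"
    using I unfolding wavelet_index_def by auto
  ultimately show ?thesis
    unfolding wavelet_span_def
    using finite_combinationsI[of "Pair I ` idx I" wavelet_index "\<lambda>p. cnj (a (snd p))" conj_wavelet]
      finite_idx[OF I] by simp
qed

lemma mean_zero_indicator_maxsub_in_span:
  "I \<in> nz_balls \<Longrightarrow> B \<in> maxsub I \<Longrightarrow> mean_zero_indicator B I \<in> wavelet_span"
  using V0_subset_wavelet_span mean_zero_indicator_maxsub_V0 by blast

lemma mean_zero_indicator_descent_step:
  assumes B: "is_ball B" and K: "is_ball K" "B \<subset> K"
  obtains K1 where "is_ball K1" "B \<subseteq> K1" "K1 \<subset> K"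
    and "mean_zero_indicator B K1 \<in> wavelet_span \<Longrightarrow> mean_zero_indicator B K \<in> wavelet_span"
proof -
  obtain x y where "x \<in> B" "y \<in> K" "y \<notin> B" using K(2) is_ball_nonempty[OF B] by blast
  then have K_nz: "K \<in> nz_balls" using nz_ballsI[OF K(1)] K(2) by blast
  obtain K1 where K1: "K1 \<in> maxsub K" "B \<subseteq> K1" using maxsub_containing[OF K_nz B K(2)] by blast
  have "measure M K1 > 0"
    using K1(1) maxsubD maxsub_open[OF K_nz] measure_open_ball_pos by blast
  then have split: "mean_zero_indicator B K = (\<lambda>x. mean_zero_indicator B K1 x
      + complex_of_real (measure M B / measure M K1) * mean_zero_indicator K1 K x)"
    by (rule mean_zero_indicator_trans)
  have step: "mean_zero_indicator B K \<in> wavelet_span" if K1_span: "mean_zero_indicator B K1 \<in> wavelet_span"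
    unfolding split wavelet_span_def using K1_span mean_zero_indicator_maxsub_in_span[OF K_nz K1(1)]
    by (intro finite_combinations_add finite_combinations_cmult) (auto simp: wavelet_span_def)
  show ?thesis using K1 maxsubD step by (intro that[of K1]) auto
qed

text \<open>If the descent of \<open>mean_zero_indicator_descent_step\<close> never reached an element of the
  span, it would produce a strictly decreasing sequence of balls containing the open set \<open>B\<close>,
  which regularity forbids.\<close>

lemma mean_zero_indicator_in_span:
  assumes B: "is_ball B" "open B" and K: "is_ball K" "B \<subseteq> K"
  shows "mean_zero_indicator B K \<in> wavelet_span"
proof (rule ccontr)
  define bad where "bad K' \<longleftrightarrow> is_ball K' \<and> B \<subseteq> K' \<and> mean_zero_indicator B K' \<notin> wavelet_span" for K'
  have "mean_zero_indicator B B \<in> wavelet_span"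
    unfolding mean_zero_indicator_self[OF B] wavelet_span_def by (rule finite_combinations_zero)
  then have bad_strict: "B \<subset> K'" if "bad K'" for K'
    using that unfolding bad_def by blast
  have descend: "\<exists>K1. bad K1 \<and> K1 \<subset> K'" if bad_K': "bad K'" for K'
  proof -
    have K'_ball: "is_ball K'" using bad_K' unfolding bad_def by blast
    obtain K1 where "is_ball K1" "B \<subseteq> K1" "K1 \<subset> K'"
      and "mean_zero_indicator B K1 \<in> wavelet_span \<Longrightarrow> mean_zero_indicator B K' \<in> wavelet_span"
      by (fact mean_zero_indicator_descent_step[OF B(1) K'_ball bad_strict[OF bad_K']])
    then show ?thesis using bad_K' unfolding bad_def by blast
  qed
  assume "mean_zero_indicator B K \<notin> wavelet_span"
  then have "bad K" using K unfolding bad_def by blast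
  then obtain Ks where Ks: "\<And>n. bad (Ks n)" "\<And>n. Ks (Suc n) \<subset> Ks n"
    using dependent_nat_choice[of "\<lambda>_. bad" "\<lambda>_ K' K1. K1 \<subset> K'"] descend by metis
  show False
    using no_descending_balls_around_open[OF B(2) is_ball_nonempty[OF B(1)]] Ks bad_strict
    unfolding bad_def by blast
qed

lemma mean_zero_test_fun_in_span:
  assumes \<phi>: "\<phi> \<in> test_fun" and mean: "(LINT x|M. \<phi> x) = 0"
  shows "\<phi> \<in> wavelet_span"
proof -
  obtain F c where F: "finite F" "F \<subseteq> {B. is_ball B \<and> open B}" and \<phi>_eq: "\<phi> = (\<lambda>x. \<Sum>B\<in>F. c B * indicator B x)"
    using \<phi> unfolding test_fun_eq by (rule finite_combinationsE)
  fix x0 :: 'a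
  obtain R where R: "\<forall>y\<in>\<Union>F. dist x0 y \<le> R"
    using F is_ball_bounded bounded_any_center[of "\<Union>F" x0] by (auto intro!: bounded_Union)
  define K where "K = cball x0 (max R 1)"
  have K_ball: "is_ball K"
    unfolding K_def is_ball_def by (intro exI[of _ x0] exI[of _ "max R 1"]) auto
  have K_contains: "B \<subseteq> K" if "B \<in> F" for B
    using R that unfolding K_def by fastforce
  have "(\<lambda>x. \<Sum>B\<in>F. c B * mean_zero_indicator B K x) \<in> wavelet_span"
    unfolding wavelet_span_def using F K_ball K_contains mean_zero_indicator_in_span
    by (intro finite_combinations_sum finite_combinations_cmult) (auto simp: wavelet_span_def)
  moreover have "(\<lambda>x. \<Sum>B\<in>F. c B * mean_zero_indicator B K x) = \<phi>"
  proof
    fix x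
    have "(\<Sum>B\<in>F. c B * mean_zero_indicator B K x)
        = \<phi> x - (\<Sum>B\<in>F. c B * complex_of_real (measure M B)) / complex_of_real (measure M K) * indicator K x"
      unfolding mean_zero_indicator_def \<phi>_eq
      by (simp add: algebra_simps sum_subtractf sum_distrib_left sum_divide_distrib)
    also have "(\<Sum>B\<in>F. c B * complex_of_real (measure M B)) = 0"
      using mean integral_test_fun[OF F] \<phi>_eq by simp
    finally show "(\<Sum>B\<in>F. c B * mean_zero_indicator B K x) = \<phi> x" by simp
  qed
  ultimately show ?thesis by simp
qed

end

section \<open>The Cauchy problem\<close>

locale wavelet_cauchy_problem = ultrametric_wavelets M Psi idx
  for M :: "'a::metric_space measure" and Psi idx +
  fixes I0 :: "'a set"
  assumes I0_ball: "is_ball I0" and I0_open: "open I0"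
begin

lemma measure_I0_pos: "measure M I0 > 0"
  using measure_open_ball_pos[OF I0_ball I0_open] .

lemma test_fun_indicator_I0: "indicator I0 \<in> test_fun"
  using test_fun_indicator[OF I0_ball I0_open] .

abbreviation wavelet_coeff :: "'a set \<times> nat \<Rightarrow> ('a \<Rightarrow> complex) \<Rightarrow> complex" where
  "wavelet_coeff p \<equiv> wave_term M I0 (Psi (fst p) (snd p))"

lemma lin_fun_integral: "lin_fun test_fun (\<lambda>\<phi>. LINT x|M. \<phi> x)"
  unfolding lin_fun_def using integrable_test_fun by simp

lemma lin_fun_wave_term:
  assumes \<Psi>: "\<Psi> \<in> test_fun"
  shows "lin_fun test_fun (wave_term M I0 \<Psi>)"
  unfolding lin_fun_def
proof (intro conjI ballI allI)
  fix \<phi> \<psi> :: "'a \<Rightarrow> complex" assume \<phi>: "\<phi> \<in> test_fun" and \<psi>: "\<psi> \<in> test_fun"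
  have "(LINT x|M. \<Psi> x * (\<phi> x + \<psi> x)) = (LINT x|M. \<Psi> x * \<phi> x) + (LINT x|M. \<Psi> x * \<psi> x)"
    using integrable_test_fun_mult[OF \<Psi> \<phi>] integrable_test_fun_mult[OF \<Psi> \<psi>] by (simp add: distrib_left)
  moreover have "(LINT x|M. \<phi> x + \<psi> x) = (LINT x|M. \<phi> x) + (LINT x|M. \<psi> x)"
    using integrable_test_fun[OF \<phi>] integrable_test_fun[OF \<psi>] by simp
  ultimately show "wave_term M I0 \<Psi> (\<lambda>x. \<phi> x + \<psi> x) = wave_term M I0 \<Psi> \<phi> + wave_term M I0 \<Psi> \<psi>"
    unfolding wave_term_def by (simp add: algebra_simps add_divide_distrib)
next
  fix \<phi> :: "'a \<Rightarrow> complex" and a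
  have "(LINT x|M. \<Psi> x * (a * \<phi> x)) = a * (LINT x|M. \<Psi> x * \<phi> x)"
    by (simp add: mult.left_commute)
  then show "wave_term M I0 \<Psi> (\<lambda>x. a * \<phi> x) = a * wave_term M I0 \<Psi> \<phi>"
    unfolding wave_term_def by (simp add: algebra_simps)
qed

lemma lin_fun_wavelet_coeff:
  assumes "p \<in> wavelet_index"
  shows "lin_fun test_fun (wavelet_coeff p)"
proof (rule lin_fun_wave_term, rule wavelet_test_fun)
  show "fst p \<in> nz_balls" "snd p \<in> idx (fst p)" using wavelet_indexD[OF assms] by auto
qed

lemma wavelet_coeff_conj_wavelet:
  assumes "p \<in> wavelet_index" "q \<in> wavelet_index"
  shows "wavelet_coeff p (conj_wavelet q) = (if p = q then 1 else 0)"
proof -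
  have p: "fst p \<in> nz_balls" "snd p \<in> idx (fst p)" and q: "fst q \<in> nz_balls" "snd q \<in> idx (fst q)"
    using wavelet_indexD assms by auto
  have "(LINT x|M. conj_wavelet q x) = 0" using wavelet_mean_zero[OF q] by simp
  moreover have "(LINT x|M. Psi (fst p) (snd p) x * conj_wavelet q x) = (if p = q then 1 else 0)"
    using wavelet_orthonormal[OF p q] by (simp add: prod_eq_iff)
  ultimately show ?thesis unfolding wave_term_def by simp
qed

lemma wave_term_indicator_I0: "wave_term M I0 \<Psi> (indicator I0) = 0"
  unfolding wave_term_def integral_indicator_complex using measure_I0_pos by simp

lemma wavelet_coeff_span:
  assumes S: "finite S" "S \<subseteq> wavelet_index" and p: "p \<in> wavelet_index"
  shows "wavelet_coeff p (\<lambda>x. \<Sum>q\<in>S. a q * conj_wavelet q x) = (if p \<in> S then a p else 0)"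
proof -
  have "wavelet_coeff p (\<lambda>x. \<Sum>q\<in>S. a q * conj_wavelet q x) = (\<Sum>q\<in>S. a q * wavelet_coeff p (conj_wavelet q))"
    by (rule lin_fun_test_fun_sum[OF lin_fun_wavelet_coeff[OF p] S(1)])
      (use S(2) conj_wavelet_test_fun in blast)
  also have "\<dots> = (\<Sum>q\<in>S. if q = p then a q else 0)"
    using wavelet_coeff_conj_wavelet[OF p] S(2) by (intro sum.cong) auto
  finally show ?thesis using S(1) by simp
qed

lemma test_fun_wavelet_expansion:
  assumes \<phi>: "\<phi> \<in> test_fun"
  obtains S where "finite S" "S \<subseteq> wavelet_index"
    and "\<And>p. p \<in> wavelet_index - S \<Longrightarrow> wavelet_coeff p \<phi> = 0"
    and "\<phi> = (\<lambda>x. (\<Sum>p\<in>S. wavelet_coeff p \<phi> * conj_wavelet p x)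
                + (LINT y|M. \<phi> y) / complex_of_real (measure M I0) * indicator I0 x)"
proof -
  define k where "k = (LINT y|M. \<phi> y) / complex_of_real (measure M I0)"
  have "(\<lambda>x. \<phi> x - k * indicator I0 x) \<in> test_fun"
    using \<phi> test_fun_indicator_I0 by (intro test_fun_diff test_fun_cmult)
  moreover have "(LINT x|M. \<phi> x - k * indicator I0 x) = 0"
    using integrable_test_fun[OF \<phi>] integrable_test_fun[OF test_fun_indicator_I0] measure_I0_pos
    by (simp add: k_def integral_indicator_complex)
  ultimately have "(\<lambda>x. \<phi> x - k * indicator I0 x) \<in> wavelet_span"
    by (rule mean_zero_test_fun_in_span)
  then obtain S a where S: "finite S" "S \<subseteq> wavelet_index"
    and rest: "(\<lambda>x. \<phi> x - k * indicator I0 x) = (\<lambda>x. \<Sum>p\<in>S. a p * conj_wavelet p x)"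
    unfolding wavelet_span_def by (rule finite_combinationsE)
  have \<phi>_eq: "\<phi> = (\<lambda>x. (\<Sum>p\<in>S. a p * conj_wavelet p x) + k * indicator I0 x)"
    using fun_cong[OF rest] by (auto simp: algebra_simps)
  have span: "(\<lambda>x. \<Sum>p\<in>S. a p * conj_wavelet p x) \<in> test_fun"
    using S conj_wavelet_test_fun by (intro test_fun_sum test_fun_cmult) auto
  have coeff: "wavelet_coeff q \<phi> = (if q \<in> S then a q else 0)" if q: "q \<in> wavelet_index" for q
  proof -
    note lin = lin_fun_wavelet_coeff[OF q]
    have "wavelet_coeff q \<phi>
        = wavelet_coeff q (\<lambda>x. \<Sum>p\<in>S. a p * conj_wavelet p x) + k * wavelet_coeff q (indicator I0)"
      using lin_fun_add[OF lin span test_fun_cmult[OF test_fun_indicator_I0]]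
        lin_fun_cmult[OF lin test_fun_indicator_I0] \<phi>_eq by metis
    then show ?thesis using wavelet_coeff_span[OF S q] wave_term_indicator_I0 by simp
  qed
  have "(\<Sum>p\<in>S. wavelet_coeff p \<phi> * conj_wavelet p x) = (\<Sum>p\<in>S. a p * conj_wavelet p x)" for x
    using coeff S(2) by (intro sum.cong) auto
  then have expansion: "\<phi> = (\<lambda>x. (\<Sum>p\<in>S. wavelet_coeff p \<phi> * conj_wavelet p x)
                + (LINT y|M. \<phi> y) / complex_of_real (measure M I0) * indicator I0 x)"
    by (subst \<phi>_eq) (simp add: k_def)
  have off: "wavelet_coeff p \<phi> = 0" if "p \<in> wavelet_index - S" for p
    using coeff that by simp
  show ?thesis by (rule that[OF S off expansion])
qed

definition expansion_coeff ::
    "('a set \<Rightarrow> complex) \<Rightarrow> (('a \<Rightarrow> complex) \<Rightarrow> complex) \<Rightarrow> ('a set \<Rightarrow> nat \<Rightarrow> complex) \<Rightarrow> 'a set \<times> nat \<Rightarrow> complex"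
  where "expansion_coeff lam f c p =
    (if lam (fst p) \<noteq> 0 then f (conj_wavelet p) / lam (fst p) else c (fst p) (snd p))"

lemma solution_formula_iff:
  "solution_formula M lam Psi idx f I0 u0 c u \<longleftrightarrow>
    (\<forall>\<phi>\<in>test_fun. ((\<lambda>p. expansion_coeff lam f c p * wavelet_coeff p \<phi>)
                      has_sum (u \<phi> - u0 * (LINT x|M. \<phi> x))) wavelet_index)"
proof -
  have "(\<lambda>(I, j). (if lam I \<noteq> 0 then f (\<lambda>x. cnj (Psi I j x)) / lam I else c I j) * wave_term M I0 (Psi I j) \<phi>)
      = (\<lambda>p. expansion_coeff lam f c p * wavelet_coeff p \<phi>)" for \<phi>
    by (intro ext) (simp add: expansion_coeff_def split: prod.split)
  then show ?thesis unfolding solution_formula_def wavelet_index_def by presburger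
qed

lemma solution_formula_exists: "\<exists>u. solution_formula M lam Psi idx f I0 u0 c u"
proof -
  let ?term = "\<lambda>\<phi> p. expansion_coeff lam f c p * wavelet_coeff p \<phi>"
  define u where "u \<phi> = u0 * (LINT x|M. \<phi> x) + infsum (?term \<phi>) wavelet_index" for \<phi>
  have has_sum_u: "(?term \<phi> has_sum (u \<phi> - u0 * (LINT x|M. \<phi> x))) wavelet_index"
    if \<phi>: "\<phi> \<in> test_fun" for \<phi>
  proof -
    obtain S where S: "finite S" "S \<subseteq> wavelet_index"
      and off: "\<And>p. p \<in> wavelet_index - S \<Longrightarrow> wavelet_coeff p \<phi> = 0"
      and "\<phi> = (\<lambda>x. (\<Sum>p\<in>S. wavelet_coeff p \<phi> * conj_wavelet p x)
                + (LINT y|M. \<phi> y) / complex_of_real (measure M I0) * indicator I0 x)"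
      by (fact test_fun_wavelet_expansion[OF \<phi>])
    have "(?term \<phi> has_sum sum (?term \<phi>) S) wavelet_index"
      by (rule has_sum_finite_support[OF S]) (simp add: off)
    then have "?term \<phi> summable_on wavelet_index" by (rule has_sum_imp_summable)
    then show ?thesis unfolding u_def by simp
  qed
  show ?thesis
    unfolding solution_formula_iff by (rule exI[of _ u]) (use has_sum_u in blast)
qed

lemma lin_fun_wavelet_expansion:
  assumes lin: "lin_fun test_fun u" and \<phi>: "\<phi> \<in> test_fun"
  obtains S where "finite S" "S \<subseteq> wavelet_index"
    and "\<And>p. p \<in> wavelet_index - S \<Longrightarrow> wavelet_coeff p \<phi> = 0"
    and "u \<phi> = (\<Sum>p\<in>S. wavelet_coeff p \<phi> * u (conj_wavelet p))
          + (LINT y|M. \<phi> y) / complex_of_real (measure M I0) * u (indicator I0)"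
proof -
  define k where "k = (LINT y|M. \<phi> y) / complex_of_real (measure M I0)"
  obtain S where S: "finite S" "S \<subseteq> wavelet_index"
    and off: "\<And>p. p \<in> wavelet_index - S \<Longrightarrow> wavelet_coeff p \<phi> = 0"
    and \<phi>_eq: "\<phi> = (\<lambda>x. (\<Sum>p\<in>S. wavelet_coeff p \<phi> * conj_wavelet p x)
                + (LINT y|M. \<phi> y) / complex_of_real (measure M I0) * indicator I0 x)"
    by (fact test_fun_wavelet_expansion[OF \<phi>])
  have span: "(\<lambda>x. \<Sum>p\<in>S. wavelet_coeff p \<phi> * conj_wavelet p x) \<in> test_fun"
    using S conj_wavelet_test_fun by (intro test_fun_sum test_fun_cmult) auto
  have u_span: "u (\<lambda>x. \<Sum>p\<in>S. wavelet_coeff p \<phi> * conj_wavelet p x)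
      = (\<Sum>p\<in>S. wavelet_coeff p \<phi> * u (conj_wavelet p))"
    using S conj_wavelet_test_fun by (intro lin_fun_test_fun_sum[OF lin]) auto
  have "u \<phi> = u (\<lambda>x. (\<Sum>p\<in>S. wavelet_coeff p \<phi> * conj_wavelet p x) + k * indicator I0 x)"
    using arg_cong[OF \<phi>_eq[folded k_def], of u] .
  also have "\<dots> = (\<Sum>p\<in>S. wavelet_coeff p \<phi> * u (conj_wavelet p)) + k * u (indicator I0)"
    using lin_fun_add[OF lin span test_fun_cmult[OF test_fun_indicator_I0]]
      lin_fun_cmult[OF lin test_fun_indicator_I0] u_span by simp
  finally show ?thesis using that[OF S off] unfolding k_def by blast
qed

lemma cauchy_solution_imp_solution_formula:
  assumes "cauchy_solution M lam Psi idx f I0 u0 u"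
  shows "solution_formula M lam Psi idx f I0 u0 (\<lambda>I j. u (\<lambda>x. cnj (Psi I j x))) u"
  unfolding solution_formula_iff
proof
  fix \<phi> :: "'a \<Rightarrow> complex" assume \<phi>: "\<phi> \<in> test_fun"
  have lin: "lin_fun test_fun u" and eq: "pdo_eq lam Psi idx u f"
    and init: "u (indicator I0) = u0 * complex_of_real (measure M I0)"
    using assms unfolding cauchy_solution_def by auto
  let ?c = "\<lambda>I j. u (\<lambda>x. cnj (Psi I j x))"
  let ?term = "\<lambda>p. expansion_coeff lam f ?c p * wavelet_coeff p \<phi>"
  have coeff: "expansion_coeff lam f ?c p = u (conj_wavelet p)" if "p \<in> wavelet_index" for p
    using eq wavelet_indexD[OF that] unfolding pdo_eq_def expansion_coeff_def
    by (auto simp: field_simps)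
  obtain S where S: "finite S" "S \<subseteq> wavelet_index"
    and off: "\<And>p. p \<in> wavelet_index - S \<Longrightarrow> wavelet_coeff p \<phi> = 0"
    and u_\<phi>: "u \<phi> = (\<Sum>p\<in>S. wavelet_coeff p \<phi> * u (conj_wavelet p))
          + (LINT y|M. \<phi> y) / complex_of_real (measure M I0) * u (indicator I0)"
    by (fact lin_fun_wavelet_expansion[OF lin \<phi>])
  have "(\<Sum>p\<in>S. wavelet_coeff p \<phi> * u (conj_wavelet p)) = sum ?term S"
    by (rule sum.cong) (use coeff S(2) in auto)
  then have "u \<phi> - u0 * (LINT x|M. \<phi> x) = sum ?term S"
    using u_\<phi> init measure_I0_pos by simp
  moreover have "(?term has_sum sum ?term S) wavelet_index"
    by (rule has_sum_finite_support[OF S]) (simp add: off)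
  ultimately show "(?term has_sum (u \<phi> - u0 * (LINT x|M. \<phi> x))) wavelet_index"
    by simp
qed

lemma
  assumes "solution_formula M lam Psi idx f I0 u0 c u"
  shows solution_formula_lin_fun: "lin_fun test_fun u"
    and solution_formula_conj_wavelet:
      "p \<in> wavelet_index \<Longrightarrow> u (conj_wavelet p) = expansion_coeff lam f c p"
    and solution_formula_indicator_I0: "u (indicator I0) = u0 * complex_of_real (measure M I0)"
proof -
  let ?term = "\<lambda>\<phi> p. expansion_coeff lam f c p * wavelet_coeff p \<phi>"
  have sums: "(?term \<phi> has_sum (u \<phi> - u0 * (LINT x|M. \<phi> x))) wavelet_index" if "\<phi> \<in> test_fun" for \<phi>
    using assms that unfolding solution_formula_iff by blast
  have lin_term: "lin_fun test_fun (\<lambda>\<phi>. ?term \<phi> p)" if "p \<in> wavelet_index" for p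
    using lin_fun_scaled[OF lin_fun_wavelet_coeff[OF that]] .
  have "lin_fun test_fun (\<lambda>\<phi>. u \<phi> - u0 * (LINT x|M. \<phi> x))"
    by (rule lin_fun_has_sum[OF test_fun_add test_fun_cmult lin_term sums])
  then have "lin_fun test_fun (\<lambda>\<phi>. (u \<phi> - u0 * (LINT x|M. \<phi> x)) + u0 * (LINT x|M. \<phi> x))"
    using lin_fun_plus lin_fun_scaled[OF lin_fun_integral] by blast
  then show "lin_fun test_fun u" by simp
next
  let ?term = "\<lambda>\<phi> p. expansion_coeff lam f c p * wavelet_coeff p \<phi>"
  assume p: "p \<in> wavelet_index"
  have "(?term (conj_wavelet p) has_sum ?term (conj_wavelet p) p) wavelet_index"
    using has_sum_finite_support[of "{p}" wavelet_index "?term (conj_wavelet p)"] p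
      wavelet_coeff_conj_wavelet[OF _ p] by auto
  then have "(?term (conj_wavelet p) has_sum expansion_coeff lam f c p) wavelet_index"
    using wavelet_coeff_conj_wavelet[OF p p] by simp
  moreover have "(?term (conj_wavelet p) has_sum (u (conj_wavelet p) - u0 * (LINT x|M. conj_wavelet p x)))
      wavelet_index"
    using assms conj_wavelet_test_fun[OF p] unfolding solution_formula_iff by blast
  ultimately have "u (conj_wavelet p) - u0 * (LINT x|M. conj_wavelet p x) = expansion_coeff lam f c p"
    using has_sum_unique by blast
  then show "u (conj_wavelet p) = expansion_coeff lam f c p"
    using wavelet_mean_zero wavelet_indexD[OF p] by simp
next
  let ?term = "\<lambda>\<phi> p. expansion_coeff lam f c p * wavelet_coeff p \<phi>"
  have "(?term (indicator I0) has_sum 0) wavelet_index"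
    by (rule has_sum_0) (simp add: wave_term_indicator_I0)
  moreover have "(?term (indicator I0) has_sum (u (indicator I0) - u0 * (LINT x|M. indicator I0 x)))
      wavelet_index"
    using assms test_fun_indicator_I0 unfolding solution_formula_iff by blast
  ultimately have "u (indicator I0) - u0 * (LINT x|M. indicator I0 x) = 0"
    using has_sum_unique by blast
  then show "u (indicator I0) = u0 * complex_of_real (measure M I0)"
    by (simp add: integral_indicator_complex)
qed

lemma solution_formula_imp_cauchy_solution:
  assumes kernel: "\<forall>I\<in>nz_balls. lam I = 0 \<longrightarrow> (\<forall>j\<in>idx I. f (\<lambda>x. cnj (Psi I j x)) = 0)"
    and formula: "solution_formula M lam Psi idx f I0 u0 c u"
  shows "cauchy_solution M lam Psi idx f I0 u0 u"
proof -
  have "lam I * u (\<lambda>x. cnj (Psi I j x)) = f (\<lambda>x. cnj (Psi I j x))" if "I \<in> nz_balls" "j \<in> idx I" for I j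
  proof -
    have "(I, j) \<in> wavelet_index" using that unfolding wavelet_index_def by simp
    then have "u (\<lambda>x. cnj (Psi I j x)) = expansion_coeff lam f c (I, j)"
      using solution_formula_conj_wavelet[OF formula, of "(I, j)"] by simp
    then show ?thesis using kernel that unfolding expansion_coeff_def by auto
  qed
  then have "pdo_eq lam Psi idx u f" unfolding pdo_eq_def by blast
  then show ?thesis
    unfolding cauchy_solution_def
    using solution_formula_lin_fun[OF formula] solution_formula_indicator_I0[OF formula] by blast
qed

end

theorem mainTheorem3:
  fixes M :: "'a::metric_space measure"
    and Psi :: "'a set \<Rightarrow> nat \<Rightarrow> 'a \<Rightarrow> complex"
    and idx :: "'a set \<Rightarrow> nat set"
    and Tk lam :: "'a set \<Rightarrow> complex"
    and f :: "('a \<Rightarrow> complex) \<Rightarrow> complex"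
    and I0 :: "'a set"
    and u0 :: complex
  assumes "regular_ultrametric TYPE('a)"
    and "ball_measure M"
    and "wavelet_basis M Psi idx"
    and "ultrametric_pdo M Tk lam Psi idx"
    and "lin_fun (test_fun0 M) f"
    and "is_ball I0" and "open I0" and "measure M I0 > 0"
    and "\<forall>I\<in>nz_balls. lam I = 0 \<longrightarrow> (\<forall>j\<in>idx I. f (\<lambda>x. cnj (Psi I j x)) = 0)"
  shows "(\<exists>u. cauchy_solution M lam Psi idx f I0 u0 u)
       \<and> (\<forall>u. cauchy_solution M lam Psi idx f I0 u0 u
              \<longleftrightarrow> (\<exists>c. solution_formula M lam Psi idx f I0 u0 c u))"
proof -
  interpret wavelet_cauchy_problem M Psi idx I0
    by unfold_locales (use assms in auto)
  have solutions: "cauchy_solution M lam Psi idx f I0 u0 u \<longleftrightarrow> (\<exists>c. solution_formula M lam Psi idx f I0 u0 c u)"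
    for u
  proof
    assume "cauchy_solution M lam Psi idx f I0 u0 u"
    then show "\<exists>c. solution_formula M lam Psi idx f I0 u0 c u"
      by (intro exI) (rule cauchy_solution_imp_solution_formula)
  next
    assume "\<exists>c. solution_formula M lam Psi idx f I0 u0 c u"
    then obtain c where "solution_formula M lam Psi idx f I0 u0 c u" ..
    then show "cauchy_solution M lam Psi idx f I0 u0 u"
      by (rule solution_formula_imp_cauchy_solution[OF assms(9)])
  qed
  obtain u where "solution_formula M lam Psi idx f I0 u0 (\<lambda>_ _. 0) u"
    using solution_formula_exists[where c = "\<lambda>_ _. 0"] ..
  then have "cauchy_solution M lam Psi idx f I0 u0 u"
    by (rule solution_formula_imp_cauchy_solution[OF assms(9)])
  then show ?thesis
    using solutions by (intro conjI exI allI)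
qed

end
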